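(* FT satisfies clone-proximity: for every finite candidate set $C$, every profile $P$ over $C$ in which $a,a'\in C$ are clones, every axis $\triangleleft\in\mathrm{FT}(P)$, every candidate $x$ with $a\triangleleft x\triangleleft a'$ or $a'\triangleleft x\triangleleft a$, and every ballot $A\in P$ with $a,a'\in A$, we have $x\in A$. For each $f\in\{\mathrm{VD},\mathrm{MF},\mathrm{BC},\mathrm{MS}\}$ clone-proximity fails: there exist $C$, a profile $P$ with clones $a,a'$, an axis $\triangleleft\in f(P)$, a candidate $x$ strictly between $a$ and $a'$ on $\triangleleft$, and a ballot $A\in P$ with $a,a'\in A$ and $x\notin A$.
   Context: Let $C$ be a finite set of candidates. An approval ballot is a nonempty subset $A\subseteq C$; a profile is a finite sequence of ballots. Two candidates $a,a'$ are clones in $P$ if for every ballot $A\in P$, $a\in A$ iff $a'\in A$. An axis is a strict linear order $\triangleleft$ on $C$; $a\trianglelefteq b$ means $a\triangleleft b$ or $a=b$. A ballot $A$ is an interval of $\triangleleft$ if for all $a,b\in A$ and every $c$ with $a\triangleleft c\triangleleft b$ we have $c\in A$. For a cost function $\mathrm{cost}_f$, the scoring rule returns $f(P)=\arg\min_{\triangleleft}\sum_{A\in P}\mathrm{cost}_f(A,\triangleleft)$ over all axes on $C$. The five rules are the scoring rules with costs: $\mathrm{cost}_{\mathrm{VD}}(A,\triangleleft)=0$ if $A$ is an interval of $\triangleleft$ and $1$ otherwise; $\mathrm{cost}_{\mathrm{MF}}(A,\triangleleft)=\min_{x,y\in A,\ x\trianglelefteq y}\big(|\{z\in A: z\triangleleft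 x \text{ or } y\triangleleft z\}|+|\{z\notin A: x\triangleleft z\triangleleft y\}|\big)$; $\mathrm{cost}_{\mathrm{BC}}(A,\triangleleft)=|\{b\notin A: a\triangleleft b\triangleleft c \text{ for some } a,c\in A\}|$; $\mathrm{cost}_{\mathrm{MS}}(A,\triangleleft)=\sum_{x\in C\setminus A}\min\big(|\{y\in A:y\triangleleft x\}|,\,|\{y\in A:x\triangleleft y\}|\big)$; $\mathrm{cost}_{\mathrm{FT}}(A,\triangleleft)=\sum_{x\in C\setminus A}|\{y\in A:y\triangleleft x\}|\cdot|\{y\in A:x\triangleleft y\}|$. *)

theory Defs
  imports Main
begin

text \<open>An axis on a finite candidate set C is a strict linear order on C, represented as a
relation lt with (x,y) in lt meaning x is left of y.\<close>

definition is_axis :: "'a set \<Rightarrow> ('a \<times> 'a) set \<Rightarrow> bool" where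
  "is_axis C lt \<longleftrightarrow> lt \<subseteq> C \<times> C \<and> strict_linear_order_on C lt"

definition axes :: "'a set \<Rightarrow> ('a \<times> 'a) set set" where
  "axes C = {lt. is_axis C lt}"

definition is_profile :: "'a set \<Rightarrow> 'a set list \<Rightarrow> bool" where
  "is_profile C P \<longleftrightarrow> (\<forall>A\<in>set P. A \<noteq> {} \<and> A \<subseteq> C)"

definition clones :: "'a set list \<Rightarrow> 'a \<Rightarrow> 'a \<Rightarrow> bool" where
  "clones P a a' \<longleftrightarrow> (\<forall>A\<in>set P. a \<in> A \<longleftrightarrow> a' \<in> A)"

definition is_interval :: "'a set \<Rightarrow> ('a \<times> 'a) set \<Rightarrow> bool" where
  "is_interval A lt \<longleftrightarrow> (\<forall>a\<in>A. \<forall>b\<in>A. \<forall>c. (a,c) \<in> lt \<and> (c,b) \<in> lt \<longrightarrow> c \<in> A)"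

definition cost_VD :: "'a set \<Rightarrow> 'a set \<Rightarrow> ('a \<times> 'a) set \<Rightarrow> nat" where
  "cost_VD C A lt = (if is_interval A lt then 0 else 1)"

definition cost_MF :: "'a set \<Rightarrow> 'a set \<Rightarrow> ('a \<times> 'a) set \<Rightarrow> nat" where
  "cost_MF C A lt = Min ((\<lambda>(x,y). card {z\<in>A. (z,x) \<in> lt \<or> (y,z) \<in> lt}
                                  + card {z\<in>C - A. (x,z) \<in> lt \<and> (z,y) \<in> lt})
                         ` {(x,y). x \<in> A \<and> y \<in> A \<and> (x = y \<or> (x,y) \<in> lt)})"

definition cost_BC :: "'a set \<Rightarrow> 'a set \<Rightarrow> ('a \<times> 'a) set \<Rightarrow> nat" where
  "cost_BC C A lt = card {b\<in>C - A. \<exists>a\<in>A. \<exists>c\<in>A. (a,b) \<in> lt \<and> (b,c) \<in> lt}"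

definition cost_MS :: "'a set \<Rightarrow> 'a set \<Rightarrow> ('a \<times> 'a) set \<Rightarrow> nat" where
  "cost_MS C A lt = (\<Sum>x\<in>C - A. min (card {y\<in>A. (y,x) \<in> lt}) (card {y\<in>A. (x,y) \<in> lt}))"

definition cost_FT :: "'a set \<Rightarrow> 'a set \<Rightarrow> ('a \<times> 'a) set \<Rightarrow> nat" where
  "cost_FT C A lt = (\<Sum>x\<in>C - A. card {y\<in>A. (y,x) \<in> lt} * card {y\<in>A. (x,y) \<in> lt})"

definition total_cost :: "('a set \<Rightarrow> 'a set \<Rightarrow> ('a \<times> 'a) set \<Rightarrow> nat)
    \<Rightarrow> 'a set \<Rightarrow> 'a set list \<Rightarrow> ('a \<times> 'a) set \<Rightarrow> nat" where
  "total_cost cost C P lt = (\<Sum>A\<leftarrow>P. cost C A lt)"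

definition scoring_rule :: "('a set \<Rightarrow> 'a set \<Rightarrow> ('a \<times> 'a) set \<Rightarrow> nat)
    \<Rightarrow> 'a set \<Rightarrow> 'a set list \<Rightarrow> ('a \<times> 'a) set set" where
  "scoring_rule cost C P =
     {lt \<in> axes C. \<forall>lt' \<in> axes C. total_cost cost C P lt \<le> total_cost cost C P lt'}"

definition clone_proximity :: "('a set \<Rightarrow> 'a set \<Rightarrow> ('a \<times> 'a) set \<Rightarrow> nat) \<Rightarrow> bool" where
  "clone_proximity cost \<longleftrightarrow>
     (\<forall>C P a a' lt x A. finite C \<longrightarrow> is_profile C P \<longrightarrow> a \<in> C \<longrightarrow> a' \<in> C \<longrightarrow>
        clones P a a' \<longrightarrow> lt \<in> scoring_rule cost C P \<longrightarrow>
        ((a,x) \<in> lt \<and> (x,a') \<in> lt \<or> (a',x) \<in> lt \<and> (x,a) \<in> lt) \<longrightarrow>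
        A \<in> set P \<longrightarrow> a \<in> A \<longrightarrow> a' \<in> A \<longrightarrow> x \<in> A)"

end

theory Submission
  imports Defs
begin

text \<open>Suppose an FT-optimal axis puts a candidate \<open>x\<close> between clones \<open>c\<close> and \<open>d\<close>. Compare it with
  the two axes in which the clones are joined, at the position of \<open>c\<close> and at the position of \<open>d\<close>.
  A ballot containing neither clone costs on average the same. For a ballot containing both, the
  penalty of a disapproved \<open>y\<close> is the product of the numbers of approved candidates left and right
  of \<open>y\<close>, and this product is midpoint concave under the two moves, strictly so when \<open>y\<close> lies
  between the clones. So a ballot approving \<open>c\<close> and \<open>d\<close> but not \<open>x\<close> makes one of the two joined axes
  strictly cheaper, a contradiction.

  For VD, MF and BC the costs are ordered \<open>VD \<le> MF \<le> BC\<close>, so it suffices to find a profile whose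
  VD-minimum and BC-minimum coincide: in \<open>{1,3}, {1,4}, {0,2,3,4}\<close> the pair ballots are intervals
  only if 1 sits between 3 and 4, so every axis costs at least 1, and the axis 0 3 1 4 2 costs 1
  under BC while separating the clones 0 and 2. For MS, the profile \<open>{0,1,2}, {1,3,4}, {0,2,3,4}\<close>
  costs 2 on the axis 0 1 2 3 4 and at least 2 on every axis.\<close>

lemma is_axisD:
  assumes "is_axis C lt"
  shows "lt \<subseteq> C \<times> C"
    and "(x,y) \<in> lt \<Longrightarrow> (y,z) \<in> lt \<Longrightarrow> (x,z) \<in> lt"
    and "(x,x) \<notin> lt"
    and "x \<in> C \<Longrightarrow> y \<in> C \<Longrightarrow> x \<noteq> y \<Longrightarrow> (x,y) \<in> lt \<or> (y,x) \<in> lt"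
  using assms unfolding is_axis_def strict_linear_order_on_def trans_def irrefl_on_def total_on_def
  by blast+

lemma is_axis_converse: "is_axis C lt \<Longrightarrow> is_axis C (lt\<inverse>)"
  unfolding is_axis_def strict_linear_order_on_def trans_def irrefl_on_def total_on_def by blast

lemma axis_has_max:
  assumes "is_axis C lt" "finite C" "A \<subseteq> C" "A \<noteq> {}"
  obtains m where "m \<in> A" "\<And>y. y \<in> A \<Longrightarrow> y \<noteq> m \<Longrightarrow> (y,m) \<in> lt"
proof -
  have "finite (lt\<inverse>)" using is_axisD(1)[OF assms(1)] assms(2) finite_subset by auto
  moreover have "acyclic (lt\<inverse>)"
    using is_axisD(2,3)[OF assms(1)] by (simp add: acyclic_irrefl irrefl_def trans_def trancl_id)
  ultimately have "wf (lt\<inverse>)" by (rule finite_acyclic_wf)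
  then obtain m where "m \<in> A" "\<And>y. (y,m) \<in> lt\<inverse> \<Longrightarrow> y \<notin> A"
    using assms(4) by (metis wfE_min')
  then show ?thesis using that is_axisD(4)[OF assms(1)] assms(3) by blast
qed

lemma axis_has_min:
  assumes "is_axis C lt" "finite C" "A \<subseteq> C" "A \<noteq> {}"
  obtains m where "m \<in> A" "\<And>y. y \<in> A \<Longrightarrow> y \<noteq> m \<Longrightarrow> (m,y) \<in> lt"
proof -
  obtain m where "m \<in> A" "\<And>y. y \<in> A \<Longrightarrow> y \<noteq> m \<Longrightarrow> (y,m) \<in> lt\<inverse>"
    using axis_has_max[OF is_axis_converse[OF assms(1)] assms(2-4)] by metis
  then show ?thesis using that by simp
qed

definition axis_of_rank :: "'a set \<Rightarrow> ('a \<Rightarrow> nat) \<Rightarrow> ('a \<times> 'a) set" where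
  "axis_of_rank C r = {(u,v). u \<in> C \<and> v \<in> C \<and> r u < r v}"

lemma is_axis_axis_of_rank: "inj_on r C \<Longrightarrow> is_axis C (axis_of_rank C r)"
  unfolding is_axis_def strict_linear_order_on_def trans_def irrefl_on_def total_on_def
    axis_of_rank_def inj_on_def
  by (auto; metis nat_neq_iff)

lemma total_cost_mono:
  "(\<And>A. A \<in> set P \<Longrightarrow> f C A lt \<le> g C A lt) \<Longrightarrow> total_cost f C P lt \<le> total_cost g C P lt"
  unfolding total_cost_def by (rule sum_list_mono)

lemma scoring_ruleI:
  assumes "lt \<in> axes C" "total_cost f C P lt \<le> k" "\<And>lt'. lt' \<in> axes C \<Longrightarrow> k \<le> total_cost f C P lt'"
  shows "lt \<in> scoring_rule f C P"
  using assms unfolding scoring_rule_def by (auto intro: order.trans)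

lemma not_clone_proximityI:
  assumes "lt \<in> scoring_rule f C P" "finite C" "is_profile C P" "a \<in> C" "a' \<in> C" "clones P a a'"
    "(a,x) \<in> lt" "(x,a') \<in> lt" "A \<in> set P" "a \<in> A" "a' \<in> A" "x \<notin> A"
  shows "\<not> clone_proximity f"
  using assms unfolding clone_proximity_def by blast

section \<open>Clone proximity of FT\<close>

definition collapse_pair :: "'a \<Rightarrow> 'a \<Rightarrow> 'a \<Rightarrow> 'a \<Rightarrow> 'a" where
  "collapse_pair c d e u = (if u = c \<or> u = d then e else u)"

text \<open>For \<open>e \<in> {c, d}\<close>: take \<open>c\<close> and \<open>d\<close> out of the axis and put them back, \<open>c\<close> immediately
  left of \<open>d\<close>, at the former position of \<open>e\<close>.\<close>
definition join_clones :: "'a set \<Rightarrow> ('a \<times> 'a) set \<Rightarrow> 'a \<Rightarrow> 'a \<Rightarrow> 'a \<Rightarrow> ('a \<times> 'a) set" where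
  "join_clones C lt c d e =
     {(u,v). u \<in> C \<and> v \<in> C \<and> ((collapse_pair c d e u, collapse_pair c d e v) \<in> lt \<or> (u = c \<and> v = d))}"

lemma is_axis_join_clones:
  assumes ax: "is_axis C lt" and "c \<in> C" "d \<in> C" "c \<noteq> d" "e = c \<or> e = d"
  shows "is_axis C (join_clones C lt c d e)"
proof -
  note F = is_axisD[OF ax]
  have "\<And>u. u \<in> C \<Longrightarrow> collapse_pair c d e u \<in> C" using assms by (auto simp: collapse_pair_def)
  then have "total_on C (join_clones C lt c d e)"
    unfolding total_on_def join_clones_def using F(4) assms(2-5) by (auto simp: collapse_pair_def split: if_splits)
  moreover have "trans (join_clones C lt c d e)"
    unfolding trans_def join_clones_def using F(2,3) assms(4,5) by (auto simp: collapse_pair_def split: if_splits)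
  moreover have "irrefl (join_clones C lt c d e)"
    unfolding irrefl_on_def join_clones_def using F(3) assms(4) by auto
  ultimately show ?thesis
    unfolding is_axis_def strict_linear_order_on_def by (auto simp: join_clones_def)
qed

lemma join_clones_iff:
  assumes "c \<in> C" "d \<in> C" "u \<in> C" "v \<in> C" "v \<notin> {c,d}"
  shows "u \<notin> {c,d} \<Longrightarrow> (u,v) \<in> join_clones C lt c d e \<longleftrightarrow> (u,v) \<in> lt"
    and "u \<notin> {c,d} \<Longrightarrow> (v,u) \<in> join_clones C lt c d e \<longleftrightarrow> (v,u) \<in> lt"
    and "u \<in> {c,d} \<Longrightarrow> (u,v) \<in> join_clones C lt c d e \<longleftrightarrow> (e,v) \<in> lt"
    and "u \<in> {c,d} \<Longrightarrow> (v,u) \<in> join_clones C lt c d e \<longleftrightarrow> (v,e) \<in> lt"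
  using assms by (auto simp: join_clones_def collapse_pair_def)

lemma card_filter_remove_two:
  assumes "finite B" "c \<in> B" "d \<in> B" "c \<noteq> d"
  shows "card {w\<in>B. P w} = card {w\<in>B-{c,d}. P w} + of_bool (P c) + of_bool (P d)"
proof -
  have split: "{w\<in>B. P w} = {w\<in>B-{c,d}. P w} \<union> {w\<in>{c,d}. P w}" using assms by auto
  have "{w\<in>{c,d}. P w} = (if P c then {c} else {}) \<union> (if P d then {d} else {})" by auto
  then have two: "card {w\<in>{c,d}. P w} = of_bool (P c) + of_bool (P d)" using assms(4) by simp
  have "card ({w\<in>B-{c,d}. P w} \<union> {w\<in>{c,d}. P w}) = card {w\<in>B-{c,d}. P w} + card {w\<in>{c,d}. P w}"
    by (rule card_Un_disjoint) (use assms(1) in auto)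
  then show ?thesis unfolding split two by (simp only: add.assoc)
qed

definition ft_summand :: "('a \<times> 'a) set \<Rightarrow> 'a set \<Rightarrow> 'a \<Rightarrow> nat" where
  "ft_summand lt B y = card {w\<in>B. (w,y) \<in> lt} * card {w\<in>B. (y,w) \<in> lt}"

lemma cost_FT_eq_sum_ft_summand: "cost_FT C B lt = (\<Sum>y\<in>C - B. ft_summand lt B y)"
  by (simp add: cost_FT_def ft_summand_def)

text \<open>With \<open>p\<close>, \<open>q\<close> recording whether \<open>c\<close>, \<open>d\<close> lie left of \<open>y\<close>: joining the clones at \<open>c\<close>, resp. \<open>d\<close>,
  turns the numbers \<open>l + p + q\<close> and \<open>r + (1 - p) + (1 - q)\<close> of ballot members left and right of \<open>y\<close>
  into \<open>l + 2p, r + 2(1 - p)\<close>, resp. \<open>l + 2q, r + 2(1 - q)\<close>;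
  the product of the two counts is midpoint concave along this move.\<close>
lemma ft_midpoint_concave:
  fixes l r :: nat
  shows "(l + 2 * of_bool p) * (r + 2 * of_bool (\<not> p)) + (l + 2 * of_bool q) * (r + 2 * of_bool (\<not> q))
           \<le> 2 * ((l + of_bool p + of_bool q) * (r + of_bool (\<not> p) + of_bool (\<not> q)))"
    and "p \<noteq> q \<Longrightarrow> (l + 2 * of_bool p) * (r + 2 * of_bool (\<not> p)) + (l + 2 * of_bool q) * (r + 2 * of_bool (\<not> q))
           < 2 * ((l + of_bool p + of_bool q) * (r + of_bool (\<not> p) + of_bool (\<not> q)))"
  by (cases p; cases q; simp add: algebra_simps)+

lemma ft_summand_join_clones:
  assumes ax: "is_axis C lt" and fin: "finite C" and B: "B \<subseteq> C" "c \<in> B" "d \<in> B" "c \<noteq> d"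
    and y: "y \<in> C" "y \<notin> B"
  shows "ft_summand (join_clones C lt c d c) B y + ft_summand (join_clones C lt c d d) B y
           \<le> 2 * ft_summand lt B y"
    and "(c,y) \<in> lt \<Longrightarrow> (y,d) \<in> lt \<Longrightarrow>
         ft_summand (join_clones C lt c d c) B y + ft_summand (join_clones C lt c d d) B y
           < 2 * ft_summand lt B y"
proof -
  have fB: "finite B" using fin B(1) finite_subset by blast
  have cd: "c \<in> C" "d \<in> C" "y \<notin> {c,d}" using B y by auto
  define l where "l = card {w\<in>B-{c,d}. (w,y) \<in> lt}"
  define r where "r = card {w\<in>B-{c,d}. (y,w) \<in> lt}"
  have side: "(y,e) \<in> lt \<longleftrightarrow> (e,y) \<notin> lt" if "e \<in> {c,d}" for e
    using is_axisD(2,3,4)[OF ax] cd that y(1) by blast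
  have "ft_summand lt B y = (l + of_bool ((c,y) \<in> lt) + of_bool ((d,y) \<in> lt))
      * (r + of_bool ((c,y) \<notin> lt) + of_bool ((d,y) \<notin> lt))"
    unfolding ft_summand_def l_def r_def card_filter_remove_two[OF fB B(2-4)] using side by simp
  moreover have "ft_summand (join_clones C lt c d e) B y
      = (l + 2 * of_bool ((e,y) \<in> lt)) * (r + 2 * of_bool ((e,y) \<notin> lt))" if "e \<in> {c,d}" for e
  proof -
    have "{w\<in>B-{c,d}. (w,y) \<in> join_clones C lt c d e} = {w\<in>B-{c,d}. (w,y) \<in> lt}"
      "{w\<in>B-{c,d}. (y,w) \<in> join_clones C lt c d e} = {w\<in>B-{c,d}. (y,w) \<in> lt}"
      using join_clones_iff(1,2)[OF cd(1,2) _ y(1) cd(3)] B(1) by auto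
    then show ?thesis
      unfolding ft_summand_def card_filter_remove_two[OF fB B(2-4)] l_def r_def
      using join_clones_iff(3,4)[OF cd(1,2) _ y(1) cd(3)] cd side[OF that] by simp
  qed
  ultimately show "ft_summand (join_clones C lt c d c) B y + ft_summand (join_clones C lt c d d) B y
      \<le> 2 * ft_summand lt B y"
    and "(c,y) \<in> lt \<Longrightarrow> (y,d) \<in> lt \<Longrightarrow>
      ft_summand (join_clones C lt c d c) B y + ft_summand (join_clones C lt c d d) B y
      < 2 * ft_summand lt B y"
    using ft_midpoint_concave[where l=l and r=r and p="(c,y) \<in> lt" and q="(d,y) \<in> lt"] side by auto
qed

lemma cost_FT_join_clones_outside:
  assumes fin: "finite C" and B: "B \<subseteq> C" and cd: "c \<in> C" "d \<in> C" "c \<noteq> d" "c \<notin> B" "d \<notin> B"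
  shows "cost_FT C B (join_clones C lt c d c) + cost_FT C B (join_clones C lt c d d) = 2 * cost_FT C B lt"
proof -
  have CB: "C - B = insert c (insert d (C - B - {c,d}))" using cd B by auto
  have split: "(\<Sum>y\<in>C-B. f y) = f c + f d + (\<Sum>y\<in>C-B-{c,d}. f y)" for f :: "'a \<Rightarrow> nat"
    by (subst CB) (use fin cd(3) in auto)
  have rest: "ft_summand (join_clones C lt c d e) B y = ft_summand lt B y" if y: "y \<in> C-B-{c,d}" for y e
  proof -
    have "(w,y) \<in> join_clones C lt c d e \<longleftrightarrow> (w,y) \<in> lt" "(y,w) \<in> join_clones C lt c d e \<longleftrightarrow> (y,w) \<in> lt"
      if "w \<in> B" for w
      using join_clones_iff(1,2)[OF cd(1,2), where u=w and v=y and lt=lt and e=e] that y B cd(4,5) by auto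
    then show ?thesis unfolding ft_summand_def by (simp cong: conj_cong)
  qed
  have ends: "ft_summand (join_clones C lt c d e) B u = ft_summand lt B e" if "u \<in> {c,d}" for u e
  proof -
    have "(w,u) \<in> join_clones C lt c d e \<longleftrightarrow> (w,e) \<in> lt" "(u,w) \<in> join_clones C lt c d e \<longleftrightarrow> (e,w) \<in> lt"
      if "w \<in> B" for w
      using join_clones_iff(3,4)[OF cd(1,2), where u=u and v=w and lt=lt and e=e] that \<open>u \<in> {c,d}\<close> B cd by auto
    then show ?thesis unfolding ft_summand_def by (simp cong: conj_cong)
  qed
  show ?thesis unfolding cost_FT_eq_sum_ft_summand split using rest ends by simp
qed

lemma cost_FT_join_clones_le:
  assumes ax: "is_axis C lt" and fin: "finite C" and B: "B \<subseteq> C"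
    and cd: "c \<in> C" "d \<in> C" "c \<noteq> d" "c \<in> B \<longleftrightarrow> d \<in> B"
  shows "cost_FT C B (join_clones C lt c d c) + cost_FT C B (join_clones C lt c d d) \<le> 2 * cost_FT C B lt"
proof (cases "c \<in> B")
  case True
  then have "d \<in> B" using cd(4) by simp
  have "cost_FT C B (join_clones C lt c d c) + cost_FT C B (join_clones C lt c d d)
      = (\<Sum>y\<in>C-B. ft_summand (join_clones C lt c d c) B y + ft_summand (join_clones C lt c d d) B y)"
    unfolding cost_FT_eq_sum_ft_summand sum.distrib ..
  also have "\<dots> \<le> (\<Sum>y\<in>C-B. 2 * ft_summand lt B y)"
    by (rule sum_mono) (use ft_summand_join_clones(1)[OF ax fin B True \<open>d \<in> B\<close> cd(3)] in auto)
  also have "\<dots> = 2 * cost_FT C B lt" unfolding cost_FT_eq_sum_ft_summand sum_distrib_left ..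
  finally show ?thesis .
next
  case False
  then show ?thesis using cost_FT_join_clones_outside[OF fin B cd(1-3)] cd(4) by simp
qed

lemma cost_FT_join_clones_less:
  assumes ax: "is_axis C lt" and fin: "finite C" and B: "B \<subseteq> C" "c \<in> B" "d \<in> B" "c \<noteq> d"
    and x: "(c,x) \<in> lt" "(x,d) \<in> lt" "x \<notin> B"
  shows "cost_FT C B (join_clones C lt c d c) + cost_FT C B (join_clones C lt c d d) < 2 * cost_FT C B lt"
proof -
  have "x \<in> C" using x is_axisD(1)[OF ax] by auto
  have "cost_FT C B (join_clones C lt c d c) + cost_FT C B (join_clones C lt c d d)
      = (\<Sum>y\<in>C-B. ft_summand (join_clones C lt c d c) B y + ft_summand (join_clones C lt c d d) B y)"
    unfolding cost_FT_eq_sum_ft_summand sum.distrib ..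
  also have "\<dots> < (\<Sum>y\<in>C-B. 2 * ft_summand lt B y)"
  proof (rule sum_strict_mono_ex1)
    show "finite (C - B)" using fin by simp
    show "\<forall>y\<in>C-B. ft_summand (join_clones C lt c d c) B y + ft_summand (join_clones C lt c d d) B y
        \<le> 2 * ft_summand lt B y"
      using ft_summand_join_clones(1)[OF ax fin B] by blast
    show "\<exists>y\<in>C-B. ft_summand (join_clones C lt c d c) B y + ft_summand (join_clones C lt c d d) B y
        < 2 * ft_summand lt B y"
      using ft_summand_join_clones(2)[OF ax fin B \<open>x \<in> C\<close> x(3,1,2)] \<open>x \<in> C\<close> x(3) by blast
  qed
  also have "\<dots> = 2 * cost_FT C B lt" unfolding cost_FT_eq_sum_ft_summand sum_distrib_left ..
  finally show ?thesis .
qed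

lemma sum_list_mono_strict_at:
  fixes f g :: "'b \<Rightarrow> 'c::ordered_cancel_comm_monoid_add"
  assumes "\<And>x. x \<in> set xs \<Longrightarrow> f x \<le> g x" "a \<in> set xs" "f a < g a"
  shows "(\<Sum>x\<leftarrow>xs. f x) < (\<Sum>x\<leftarrow>xs. g x)"
proof -
  have "(\<Sum>x\<leftarrow>remove1 a xs. f x) \<le> (\<Sum>x\<leftarrow>remove1 a xs. g x)"
    using assms(1) by (intro sum_list_mono) (meson notin_set_remove1)
  then show ?thesis using assms(3) unfolding sum_list_map_remove1[OF assms(2)]
    by (simp add: add_less_le_mono)
qed

lemma FT_fills_gap_between_clones:
  assumes fin: "finite C" and prof: "is_profile C P" and cd: "c \<in> C" "d \<in> C" "clones P c d"
    and opt: "lt \<in> scoring_rule cost_FT C P" and x: "(c,x) \<in> lt" "(x,d) \<in> lt"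
    and A: "A \<in> set P" "c \<in> A" "d \<in> A"
  shows "x \<in> A"
proof (rule ccontr)
  assume "x \<notin> A"
  have ax: "is_axis C lt" using opt by (simp add: scoring_rule_def axes_def)
  have "c \<noteq> d" using is_axisD(2,3)[OF ax] x by blast
  have "join_clones C lt c d e \<in> axes C" if "e \<in> {c,d}" for e
    using is_axis_join_clones[OF ax cd(1,2) \<open>c \<noteq> d\<close>] that by (auto simp: axes_def)
  then have opt_le: "total_cost cost_FT C P lt \<le> total_cost cost_FT C P (join_clones C lt c d e)"
    if "e \<in> {c,d}" for e
    using opt that by (auto simp: scoring_rule_def)
  have BC: "B \<subseteq> C" if "B \<in> set P" for B using prof that by (auto simp: is_profile_def)
  have "(\<Sum>B\<leftarrow>P. cost_FT C B (join_clones C lt c d c) + cost_FT C B (join_clones C lt c d d))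
      < (\<Sum>B\<leftarrow>P. 2 * cost_FT C B lt)"
  proof (rule sum_list_mono_strict_at[OF _ A(1)])
    show "cost_FT C B (join_clones C lt c d c) + cost_FT C B (join_clones C lt c d d) \<le> 2 * cost_FT C B lt"
      if "B \<in> set P" for B
      using cost_FT_join_clones_le[OF ax fin BC[OF that] cd(1,2) \<open>c \<noteq> d\<close>] cd(3) that
      unfolding clones_def by blast
    show "cost_FT C A (join_clones C lt c d c) + cost_FT C A (join_clones C lt c d d) < 2 * cost_FT C A lt"
      by (rule cost_FT_join_clones_less[OF ax fin BC[OF A(1)] A(2,3) \<open>c \<noteq> d\<close> x \<open>x \<notin> A\<close>])
  qed
  then have "total_cost cost_FT C P (join_clones C lt c d c) + total_cost cost_FT C P (join_clones C lt c d d)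
      < 2 * total_cost cost_FT C P lt"
    unfolding total_cost_def sum_list_addf sum_list_const_mult .
  then show False using opt_le[of c] opt_le[of d] by simp
qed

lemma clone_proximity_FT: "clone_proximity cost_FT"
  unfolding clone_proximity_def
proof (intro allI impI)
  fix C P a a' lt x A
  assume fin: "finite C" and prof: "is_profile C P" and "a \<in> C" "a' \<in> C" and cl: "clones P a a'"
    and opt: "lt \<in> scoring_rule cost_FT C P" and A: "A \<in> set P" "a \<in> A" "a' \<in> A"
    and "(a,x) \<in> lt \<and> (x,a') \<in> lt \<or> (a',x) \<in> lt \<and> (x,a) \<in> lt"
  moreover have "clones P a' a" using cl by (auto simp: clones_def)
  ultimately show "x \<in> A"
    using FT_fills_gap_between_clones[OF fin prof _ _ _ opt _ _ A(1)] A(2,3) by blast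
qed

section \<open>Comparing the costs\<close>

lemma cost_BC_eq_0_iff:
  assumes "is_axis C lt" "finite C"
  shows "cost_BC C A lt = 0 \<longleftrightarrow> is_interval A lt"
  using is_axisD(1)[OF assms(1)] assms(2)
  unfolding cost_BC_def is_interval_def by auto

lemma cost_MF_eq_0_imp_interval:
  assumes ax: "is_axis C lt" and "finite C" "A \<subseteq> C" "A \<noteq> {}" and "cost_MF C A lt = 0"
  shows "is_interval A lt"
proof -
  let ?f = "\<lambda>(x,y). card {z\<in>A. (z,x) \<in> lt \<or> (y,z) \<in> lt} + card {z\<in>C - A. (x,z) \<in> lt \<and> (z,y) \<in> lt}"
  let ?S = "{(x,y). x \<in> A \<and> y \<in> A \<and> (x = y \<or> (x,y) \<in> lt)}"
  have fA: "finite A" using assms(2,3) finite_subset by blast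
  have fin: "finite (?f ` ?S)" by (rule finite_imageI, rule finite_subset[of _ "A \<times> A"]) (use fA in auto)
  have ne: "?f ` ?S \<noteq> {}" unfolding image_is_empty using assms(4) by blast
  have "0 \<in> ?f ` ?S" using Min_in[OF fin ne] assms(5) unfolding cost_MF_def by simp
  then obtain p where "p \<in> ?S" "0 = ?f p" by (rule imageE)
  then obtain x y where xy: "x \<in> A" "y \<in> A"
    and "card {z\<in>A. (z,x) \<in> lt \<or> (y,z) \<in> lt} = 0" "card {z\<in>C - A. (x,z) \<in> lt \<and> (z,y) \<in> lt} = 0"
    by (cases p) auto
  then have outer: "{z\<in>A. (z,x) \<in> lt \<or> (y,z) \<in> lt} = {}"
    and inner: "{z\<in>C - A. (x,z) \<in> lt \<and> (z,y) \<in> lt} = {}"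
    using fA assms(2) by simp_all
  show ?thesis unfolding is_interval_def
  proof (intro ballI allI impI)
    fix a b c assume "a \<in> A" "b \<in> A" and c: "(a,c) \<in> lt \<and> (c,b) \<in> lt"
    then have "a = x \<or> (x,a) \<in> lt" "b = y \<or> (b,y) \<in> lt"
      using is_axisD(4)[OF ax] outer xy assms(3) by blast+
    then have "(x,c) \<in> lt" "(c,y) \<in> lt" using c is_axisD(2)[OF ax] by blast+
    then show "c \<in> A" using inner is_axisD(1)[OF ax] by blast
  qed
qed

lemma cost_VD_le_cost_MF:
  assumes "is_axis C lt" "finite C" "A \<subseteq> C" "A \<noteq> {}"
  shows "cost_VD C A lt \<le> cost_MF C A lt"
  using cost_MF_eq_0_imp_interval[OF assms] by (cases "cost_MF C A lt = 0") (auto simp: cost_VD_def)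

lemma cost_MF_le_cost_BC:
  assumes ax: "is_axis C lt" and "finite C" "A \<subseteq> C" "A \<noteq> {}"
  shows "cost_MF C A lt \<le> cost_BC C A lt"
proof -
  obtain x where x: "x \<in> A" "\<And>z. z \<in> A \<Longrightarrow> z \<noteq> x \<Longrightarrow> (x,z) \<in> lt"
    using axis_has_min[OF assms] by metis
  obtain y where y: "y \<in> A" "\<And>z. z \<in> A \<Longrightarrow> z \<noteq> y \<Longrightarrow> (z,y) \<in> lt"
    using axis_has_max[OF assms] by metis
  have fA: "finite A" using assms(2,3) finite_subset by blast
  have xy: "x = y \<or> (x,y) \<in> lt" using x y by blast
  have outer: "{z\<in>A. (z,x) \<in> lt \<or> (y,z) \<in> lt} = {}"
    using x y is_axisD(2,3)[OF ax] by blast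
  have inner: "{z\<in>C - A. (x,z) \<in> lt \<and> (z,y) \<in> lt}
      = {b\<in>C - A. \<exists>a\<in>A. \<exists>c\<in>A. (a,b) \<in> lt \<and> (b,c) \<in> lt}"
    using x y is_axisD(2)[OF ax] by blast
  have "cost_BC C A lt = (\<lambda>(x,y). card {z\<in>A. (z,x) \<in> lt \<or> (y,z) \<in> lt}
      + card {z\<in>C - A. (x,z) \<in> lt \<and> (z,y) \<in> lt}) (x,y)"
    unfolding cost_BC_def by (simp only: split_conv outer inner card.empty add_0)
  then have "cost_BC C A lt \<in> (\<lambda>(x,y). card {z\<in>A. (z,x) \<in> lt \<or> (y,z) \<in> lt}
      + card {z\<in>C - A. (x,z) \<in> lt \<and> (z,y) \<in> lt}) ` {(x,y). x \<in> A \<and> y \<in> A \<and> (x = y \<or> (x,y) \<in> lt)}"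
    by (rule rev_image_eqI[rotated]) (simp add: x(1) y(1) xy)
  moreover have "finite {(x,y). x \<in> A \<and> y \<in> A \<and> (x = y \<or> (x,y) \<in> lt)}"
    by (rule finite_subset[of _ "A \<times> A"]) (use fA in auto)
  ultimately show ?thesis unfolding cost_MF_def by (simp add: Min_le)
qed

lemma cost_BC_le_cost_MS:
  assumes ax: "is_axis C lt" and fin: "finite C"
  shows "cost_BC C A lt \<le> cost_MS C A lt"
proof -
  let ?m = "\<lambda>x. min (card {y\<in>A. (y,x) \<in> lt}) (card {y\<in>A. (x,y) \<in> lt})"
  let ?S = "{b\<in>C - A. \<exists>a\<in>A. \<exists>c\<in>A. (a,b) \<in> lt \<and> (b,c) \<in> lt}"
  have "1 \<le> ?m b" if "b \<in> ?S" for b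
  proof -
    have "{y\<in>A. (y,b) \<in> lt} \<noteq> {}" "{y\<in>A. (b,y) \<in> lt} \<noteq> {}" using that by blast+
    moreover have "finite {y\<in>A. (y,b) \<in> lt}" "finite {y\<in>A. (b,y) \<in> lt}"
      using is_axisD(1)[OF ax] fin by (auto intro: finite_subset[of _ C])
    ultimately show ?thesis by (simp add: Suc_le_eq card_gt_0_iff)
  qed
  then have "card ?S \<le> sum ?m ?S" using sum_mono[of ?S "\<lambda>_. 1" ?m] by simp
  also have "\<dots> \<le> sum ?m (C - A)" by (rule sum_mono2) (use fin in auto)
  finally show ?thesis unfolding cost_BC_def cost_MS_def .
qed

lemma card_le_cost_BC:
  assumes "finite C" "S \<subseteq> C - A" "\<And>s. s \<in> S \<Longrightarrow> \<exists>a\<in>A. \<exists>b\<in>A. (a,s) \<in> lt \<and> (s,b) \<in> lt"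
  shows "card S \<le> cost_BC C A lt"
  unfolding cost_BC_def by (rule card_mono) (use assms in auto)

lemma cost_BC_converse: "cost_BC C A (lt\<inverse>) = cost_BC C A lt"
  unfolding cost_BC_def by (rule arg_cong[of _ _ card]) blast

lemma cost_MS_ge_summand:
  "finite C \<Longrightarrow> x \<in> C - A \<Longrightarrow>
     min (card {y\<in>A. (y,x) \<in> lt}) (card {y\<in>A. (x,y) \<in> lt}) \<le> cost_MS C A lt"
  unfolding cost_MS_def by (rule member_le_sum) auto

section \<open>Counterexamples for VD, MF, BC and MS\<close>

lemma intervals_of_pairs_between:
  assumes ax: "is_axis C lt" and "b \<in> C" "p \<in> C" "q \<in> C" "b \<noteq> p" "b \<noteq> q" "p \<noteq> q"
    and "is_interval {b,p} lt" "is_interval {b,q} lt"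
  shows "(p,b) \<in> lt \<and> (b,q) \<in> lt \<or> (q,b) \<in> lt \<and> (b,p) \<in> lt"
proof -
  have "(p,q) \<in> lt \<or> (q,p) \<in> lt" "(p,b) \<in> lt \<or> (b,p) \<in> lt" "(q,b) \<in> lt \<or> (b,q) \<in> lt"
    using is_axisD(4)[OF ax] assms(2-7) by blast+
  then show ?thesis using assms(5-9) unfolding is_interval_def by blast
qed

lemma total_cost_VD_pos:
  assumes ax: "is_axis C lt" and "b \<in> C" "p \<in> C" "q \<in> C" "b \<noteq> p" "b \<noteq> q" "p \<noteq> q"
    and "p \<in> A" "q \<in> A" "b \<notin> A"
  shows "1 \<le> total_cost cost_VD C [{b,p}, {b,q}, A] lt"
proof (rule ccontr)
  assume "\<not> 1 \<le> total_cost cost_VD C [{b,p}, {b,q}, A] lt"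
  then have "is_interval {b,p} lt" "is_interval {b,q} lt" "is_interval A lt"
    by (simp_all add: total_cost_def cost_VD_def split: if_splits)
  with intervals_of_pairs_between[OF assms(1-7)] show False
    using assms(8-10) unfolding is_interval_def by blast
qed

lemma scoring_rule_VD_MF_BC:
  assumes "lt \<in> axes C" "finite C" "is_profile C P"
    and "total_cost cost_BC C P lt \<le> k" "\<And>lt'. lt' \<in> axes C \<Longrightarrow> k \<le> total_cost cost_VD C P lt'"
    and "f \<in> {cost_VD, cost_MF, cost_BC}"
  shows "lt \<in> scoring_rule f C P"
proof -
  have VD_MF_BC: "total_cost cost_VD C P lt' \<le> total_cost cost_MF C P lt'"
      "total_cost cost_MF C P lt' \<le> total_cost cost_BC C P lt'" if "lt' \<in> axes C" for lt'
    using that assms(2,3) unfolding axes_def is_profile_def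
    by (auto intro!: total_cost_mono cost_VD_le_cost_MF cost_MF_le_cost_BC)
  have "total_cost cost_VD C P lt' \<le> total_cost f C P lt'" "total_cost f C P lt' \<le> total_cost cost_BC C P lt'"
    if "lt' \<in> axes C" for lt'
    using VD_MF_BC[OF that] assms(6) by auto
  then show ?thesis using assms(1,4,5) by (intro scoring_ruleI[where k=k]) (auto intro: order.trans)
qed

lemma not_clone_proximity_VD_MF_BC:
  assumes "f \<in> {cost_VD, cost_MF, cost_BC :: nat set \<Rightarrow> nat set \<Rightarrow> (nat \<times> nat) set \<Rightarrow> nat}"
  shows "\<not> clone_proximity f"
proof -
  let ?C = "{0,1,2,3,4} :: nat set" and ?P = "[{1,3}, {1,4}, {0,2,3,4}] :: nat set list"
  \<comment> \<open>the axis 0, 3, 1, 4, 2\<close>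
  let ?lt = "axis_of_rank ?C (\<lambda>u. [0,2,4,1,3] ! u)"
  have "?lt \<in> axes ?C" unfolding axes_def mem_Collect_eq by (rule is_axis_axis_of_rank) (simp add: inj_on_def)
  moreover have "total_cost cost_BC ?C ?P ?lt \<le> 1"
    by (simp add: total_cost_def cost_BC_def axis_of_rank_def insert_Diff_if Collect_conj_eq)
  moreover have "1 \<le> total_cost cost_VD ?C ?P lt'" if "lt' \<in> axes ?C" for lt'
    using total_cost_VD_pos[of ?C lt' 1 3 4 "{0,2,3,4}"] that by (simp add: axes_def)
  moreover have "is_profile ?C ?P" by (simp add: is_profile_def)
  ultimately have "?lt \<in> scoring_rule f ?C ?P" using scoring_rule_VD_MF_BC assms by blast
  then show ?thesis
    by (rule not_clone_proximityI[where a=0 and a'=2 and x=1 and A="{0,2,3,4}"])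
      (auto simp: is_profile_def clones_def axis_of_rank_def)
qed

lemma cost_BC_groups_on_one_side:
  assumes ax: "is_axis C lt" and fin: "finite C" and "c \<in> C" "G \<union> H \<subseteq> C" "c \<notin> G \<union> H"
    and "G \<inter> H = {}" "G \<union> H \<noteq> {}" and right: "\<And>y. y \<in> G \<union> H \<Longrightarrow> (c,y) \<in> lt"
  shows "min (card G) (card H) \<le> cost_BC C (insert c G) lt + cost_BC C (insert c H) lt"
proof -
  obtain m where m: "m \<in> G \<union> H" "\<And>y. y \<in> G \<union> H \<Longrightarrow> y \<noteq> m \<Longrightarrow> (y,m) \<in> lt"
    using axis_has_max[OF ax fin assms(4,7)] by metis
  have far: "card K' \<le> cost_BC C (insert c K) lt"
    if K: "m \<in> K" "K \<union> K' = G \<union> H" "K \<inter> K' = {}" for K K'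
  proof (rule card_le_cost_BC[OF fin])
    show "K' \<subseteq> C - insert c K" using K assms(4,5) by blast
    fix y assume "y \<in> K'"
    then have "(c,y) \<in> lt" "(y,m) \<in> lt" using m right K by blast+
    then show "\<exists>a\<in>insert c K. \<exists>b\<in>insert c K. (a,y) \<in> lt \<and> (y,b) \<in> lt" using K(1) by blast
  qed
  show ?thesis
  proof (cases "m \<in> G")
    case True
    then show ?thesis using far[of G H] assms(6) by simp
  next
    case False
    then have "m \<in> H" using m(1) by blast
    then show ?thesis using far[of H G] assms(6) by (simp add: Un_commute Int_commute)
  qed
qed

lemma intervals_separate_groups:
  assumes ax: "is_axis C lt" and "c \<in> C" "G \<union> H \<subseteq> C" "c \<notin> G \<union> H" "G \<inter> H = {}"
    and "G \<noteq> {}" "H \<noteq> {}" and int: "is_interval (insert c G) lt" "is_interval (insert c H) lt"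
  shows "{y\<in>G \<union> H. (y,c) \<in> lt} = G \<or> {y\<in>G \<union> H. (y,c) \<in> lt} = H"
proof -
  have side: "(c,y) \<in> lt \<longleftrightarrow> (y,c) \<notin> lt" if "y \<in> G \<union> H" for y
    using is_axisD(2,3,4)[OF ax] assms(2-4) that by blast
  have opposite: "(g,c) \<in> lt \<longleftrightarrow> (h,c) \<notin> lt" if "g \<in> G" "h \<in> H" for g h
  proof -
    have "g \<noteq> h" "(g,h) \<in> lt \<or> (h,g) \<in> lt" using is_axisD(4)[OF ax] assms(3,5) that by blast+
    then show ?thesis
      using side that int assms(4,5) unfolding is_interval_def by blast
  qed
  obtain g0 h0 where "g0 \<in> G" "h0 \<in> H" using assms(6,7) by blast
  then show ?thesis
    using opposite by (cases "(g0,c) \<in> lt") blast+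
qed

lemma cost_BC_pair_ballots_ge_2:
  assumes ax: "is_axis C lt" and fin: "finite C" and c: "c \<in> C" "G \<union> H \<subseteq> C" "c \<notin> G \<union> H"
    and GH: "G \<inter> H = {}" "card G = 2" "card H = 2"
    and one_side: "{y\<in>G \<union> H. (y,c) \<in> lt} = {} \<or> {y\<in>G \<union> H. (c,y) \<in> lt} = {}"
  shows "2 \<le> cost_BC C (insert c G) lt + cost_BC C (insert c H) lt"
proof -
  have ne: "G \<union> H \<noteq> {}" using GH(2) by auto
  have side: "(c,y) \<in> lt \<longleftrightarrow> (y,c) \<notin> lt" if "y \<in> G \<union> H" for y
    using is_axisD(2,3,4)[OF ax] c that by blast
  from one_side show ?thesis
  proof
    assume "{y\<in>G \<union> H. (y,c) \<in> lt} = {}"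
    then have "(c,y) \<in> lt" if "y \<in> G \<union> H" for y using side that by blast
    then show ?thesis using cost_BC_groups_on_one_side[OF ax fin c GH(1) ne] GH by simp
  next
    assume "{y\<in>G \<union> H. (c,y) \<in> lt} = {}"
    then have "(c,y) \<in> lt\<inverse>" if "y \<in> G \<union> H" for y using side that by blast
    then show ?thesis
      using cost_BC_groups_on_one_side[OF is_axis_converse[OF ax] fin c GH(1) ne] GH
      unfolding cost_BC_converse by simp
  qed
qed

lemma total_cost_MS_ge_2:
  assumes ax: "is_axis C lt" and fin: "finite C" and c: "c \<in> C" "G \<union> H \<subseteq> C" "c \<notin> G \<union> H"
    and GH: "G \<inter> H = {}" "card G = 2" "card H = 2"
  shows "2 \<le> total_cost cost_MS C [insert c G, insert c H, G \<union> H] lt"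
proof -
  define bc where "bc = cost_BC C (insert c G) lt + cost_BC C (insert c H) lt"
  define L where "L = {y\<in>G \<union> H. (y,c) \<in> lt}"
  define R where "R = {y\<in>G \<union> H. (c,y) \<in> lt}"
  have fGH: "finite (G \<union> H)" using fin c(2) finite_subset by blast
  have LR_fin: "finite L" "finite R" using fGH unfolding L_def R_def by simp_all
  have "L \<union> R = G \<union> H" "L \<inter> R = {}"
    unfolding L_def R_def using is_axisD(2,3,4)[OF ax] c by blast+
  then have LR: "card L + card R = 4"
    using GH fGH card_Un_disjoint[OF LR_fin] by (simp add: card_Un_disjoint)
  have "min (card L) (card R) \<le> cost_MS C (G \<union> H) lt"
    unfolding L_def R_def by (rule cost_MS_ge_summand[OF fin]) (use c in blast)
  then have "bc + min (card L) (card R) \<le> total_cost cost_MS C [insert c G, insert c H, G \<union> H] lt"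
    using cost_BC_le_cost_MS[OF ax fin, of "insert c G"] cost_BC_le_cost_MS[OF ax fin, of "insert c H"]
    unfolding bc_def total_cost_def by simp
  \<comment> \<open>Either \<open>c\<close> splits \<open>G \<union> H\<close> evenly, or some side of \<open>c\<close> holds at most one candidate, and then
    the two ballots \<open>insert c G\<close>, \<open>insert c H\<close> cannot both be intervals.\<close>
  moreover have "2 \<le> bc" if "card L = 0 \<or> card R = 0"
    using cost_BC_pair_ballots_ge_2[OF assms] that LR_fin unfolding bc_def L_def R_def by auto
  moreover have "card L = 2" if "bc = 0"
  proof -
    have "is_interval (insert c G) lt" "is_interval (insert c H) lt"
      using \<open>bc = 0\<close> cost_BC_eq_0_iff[OF ax fin] unfolding bc_def by simp_all
    then show ?thesis
      using intervals_separate_groups[OF ax c GH(1)] GH(2,3) unfolding L_def by fastforce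
  qed
  ultimately show ?thesis using LR by (cases "bc = 0") linarith+
qed

lemma not_clone_proximity_MS:
  "\<not> clone_proximity (cost_MS :: nat set \<Rightarrow> nat set \<Rightarrow> (nat \<times> nat) set \<Rightarrow> nat)"
proof -
  let ?C = "{0,1,2,3,4} :: nat set" and ?P = "[{0,1,2}, {1,3,4}, {0,2,3,4}] :: nat set list"
  let ?lt = "axis_of_rank ?C id"
  have "?lt \<in> axes ?C" unfolding axes_def mem_Collect_eq by (rule is_axis_axis_of_rank) simp
  moreover have "total_cost cost_MS ?C ?P ?lt \<le> 2"
    by (simp add: total_cost_def cost_MS_def axis_of_rank_def insert_Diff_if Collect_conj_eq)
  moreover have "2 \<le> total_cost cost_MS ?C ?P lt'" if "lt' \<in> axes ?C" for lt'
    using total_cost_MS_ge_2[of ?C lt' 1 "{0,2}" "{3,4}"] that by (simp add: axes_def insert_commute)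
  ultimately have "?lt \<in> scoring_rule cost_MS ?C ?P" by (rule scoring_ruleI)
  then show ?thesis
    by (rule not_clone_proximityI[where a=0 and a'=2 and x=1 and A="{0,2,3,4}"])
      (auto simp: is_profile_def clones_def axis_of_rank_def)
qed

theorem mainTheorem9:
  shows "clone_proximity (cost_FT :: 'a set \<Rightarrow> 'a set \<Rightarrow> ('a \<times> 'a) set \<Rightarrow> nat)
    \<and> \<not> clone_proximity (cost_VD :: nat set \<Rightarrow> nat set \<Rightarrow> (nat \<times> nat) set \<Rightarrow> nat)
    \<and> \<not> clone_proximity (cost_MF :: nat set \<Rightarrow> nat set \<Rightarrow> (nat \<times> nat) set \<Rightarrow> nat)
    \<and> \<not> clone_proximity (cost_BC :: nat set \<Rightarrow> nat set \<Rightarrow> (nat \<times> nat) set \<Rightarrow> nat)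
    \<and> \<not> clone_proximity (cost_MS :: nat set \<Rightarrow> nat set \<Rightarrow> (nat \<times> nat) set \<Rightarrow> nat)"
  using clone_proximity_FT not_clone_proximity_VD_MF_BC not_clone_proximity_MS by blast

end
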